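(* Let $k$ divide $n$ with $n/k>1$. Then the positive semidefinite biquadratic form $B_{\Phi^{(n,k)}}$ decomposes as a sum of positive semidefinite biquadratic forms: \[ B_{\Phi^{(n,k)}}=\sum_{d=1}^{k} F_{\sigma_k,d}+\sum_{\substack{1\le i<j\le n \\ i \not\equiv j \pmod{k}}}\left( x_i y_i -x_j y_j \right)^2 , \] where \[ F_{\sigma_k,d}=\left( \frac{n}{k}-2 \right)\sum_{i \equiv d \pmod{k}} x_i^2 y_i^2 -2 \sum_{\substack{1\le i<j\le n \\ i \equiv j\equiv d \pmod{k}}} x_iy_ix_jy_j +\sum_{i \equiv d \pmod{k}} x_{\sigma_k(i)}^2y_i^2 \qquad (d=1,\dots,k). \] Furthermore, each $F_{\sigma_k,d}$ is positive semidefinite and, after renaming $x_{d+ik}$ as $x_{i+1}$ and $y_{d+ik}$ as $y_{i+1}$, coincides with the biquadratic form $B_{\Phi^{(n/k,1)}}$.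
   Context: For $n\ge 3$ and $k=1,\dots,n-1$, let $\sigma_k:\{1,\dots,n\}\to\{1,\dots,n\}$ be the permutation $\sigma_k(i)=i+k \bmod n$. The Qi–Hou map $\Phi^{(n,k)}:M_n\to M_n$ is defined by $\Phi^{(n,k)}([a_{ij}])=\mathrm{diag}(b_1,\dots,b_n)-[a_{ij}]$ with $b_i=(n-1)a_{ii}+a_{\sigma_k(i),\sigma_k(i)}$; it is a positive linear map. Its associated biquadratic form, for $x=(x_1,\dots,x_n)^{\rm t},y=(y_1,\dots,y_n)^{\rm t}\in\mathbb R^n$, is \[ B_{\Phi^{(n,k)}}(x:y)=y^{\rm t}\,\Phi^{(n,k)}(xx^{\rm t})\,y=(n-2)\sum_{i=1}^n x_i^2 y_i^2+\sum_{i=1}^n x_{\sigma_k(i)}^2 y_i^2-2\sum_{1\le i<j\le n}x_iy_ix_jy_j , \] which is positive semidefinite since $\Phi^{(n,k)}$ is positive. (In particular $B_{\Phi^{(n/k,1)}}$ is the analogous form in $n/k$ pairs of variables with the cyclic shift $\sigma_1(j)=j+1 \bmod n/k$.) *)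

theory Defs
  imports Complex_Main
begin

text \<open>Indices run over {1..n}. The cyclic shift sigma_k(i) = i + k mod n is read
  with representatives in {1..n} (i.e. the residue 0 is represented by n).\<close>
definition sigma :: "nat \<Rightarrow> nat \<Rightarrow> nat \<Rightarrow> nat" where
  "sigma n k i = (i + k - 1) mod n + 1"

definition qi_hou :: "nat \<Rightarrow> nat \<Rightarrow> (nat \<Rightarrow> nat \<Rightarrow> real) \<Rightarrow> (nat \<Rightarrow> nat \<Rightarrow> real)" where
  "qi_hou n k A = (\<lambda>i j. (if i = j then (real n - 1) * A i i + A (sigma n k i) (sigma n k i) else 0)
                         - A i j)"

definition biquad :: "nat \<Rightarrow> nat \<Rightarrow> (nat \<Rightarrow> real) \<Rightarrow> (nat \<Rightarrow> real) \<Rightarrow> real" where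
  "biquad n k x y = (\<Sum>i\<in>{1..n}. \<Sum>j\<in>{1..n}. y i * qi_hou n k (\<lambda>a b. x a * x b) i j * y j)"

definition Fform :: "nat \<Rightarrow> nat \<Rightarrow> nat \<Rightarrow> (nat \<Rightarrow> real) \<Rightarrow> (nat \<Rightarrow> real) \<Rightarrow> real" where
  "Fform n k d x y =
     (real (n div k) - 2) * (\<Sum>i\<in>{i. 1 \<le> i \<and> i \<le> n \<and> i mod k = d mod k}. (x i)^2 * (y i)^2)
     - 2 * (\<Sum>(i,j)\<in>{(i,j). 1 \<le> i \<and> i < j \<and> j \<le> n \<and> i mod k = d mod k \<and> j mod k = d mod k}.
              x i * y i * x j * y j)
     + (\<Sum>i\<in>{i. 1 \<le> i \<and> i \<le> n \<and> i mod k = d mod k}. (x (sigma n k i))^2 * (y i)^2)"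

end

(*
  With a i = x i * y i, the form expands to
    (n - 1) * \<Sum> a i\<^sup>2 + \<Sum> x (\<sigma> i)\<^sup>2 * y i\<^sup>2 - (\<Sum> a i)\<^sup>2.
  Splitting (\<Sum> a i)\<^sup>2 into squares and cross terms, and the cross terms according to whether
  i and j lie in the same residue class mod k, gives the decomposition: a class has n/k elements,
  so each i occurs in n - n/k mixed pairs, which is exactly what the squares (a i - a j)\<^sup>2
  consume. A residue class d, d + k, ..., d + (n/k - 1) k is permuted by \<sigma>_k as the cyclic
  shift \<sigma>_1 of its position, which identifies F_d with the form for (n/k, 1).

  Positivity holds for any permutation s of an m-set, m \<ge> 2:
    (\<Sum> x i y i)\<^sup>2 \<le> (m - 1) \<Sum> x i\<^sup>2 y i\<^sup>2 + \<Sum> x (s i)\<^sup>2 y i\<^sup>2.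
  Cauchy--Schwarz reduces this to \<Sum> 1 / (m - 1 + r i\<^sup>2) \<le> 1 for positive r i with product 1,
  which is again Cauchy--Schwarz together with AM--GM applied to the m (m - 1) products r i r j.
*)
theory Submission
  imports Defs "HOL-Analysis.Convex"
begin

lemma power2_sum_eq_offdiag:
  fixes r :: "'a \<Rightarrow> real"
  assumes "finite I"
  shows "(\<Sum>i\<in>I. r i)^2 = (\<Sum>i\<in>I. (r i)^2) + (\<Sum>(i,j)\<in>Sigma I (\<lambda>i. I - {i}). r i * r j)"
proof -
  have "(\<Sum>i\<in>I. r i)^2 = (\<Sum>i\<in>I. (r i)^2 + (\<Sum>j\<in>I - {i}. r i * r j))"
    unfolding power2_eq_square sum_product
    by (intro sum.cong refl) (simp add: assms sum.remove)
  also have "\<dots> = (\<Sum>i\<in>I. (r i)^2) + (\<Sum>(i,j)\<in>Sigma I (\<lambda>i. I - {i}). r i * r j)"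
    using assms by (simp add: sum.distrib sum.Sigma)
  finally show ?thesis .
qed

lemma sum_symmetric_pairs_ordered:
  fixes G :: "'a::linorder \<Rightarrow> 'a \<Rightarrow> 'b::comm_monoid_add"
  assumes fin: "finite U" and sym: "\<And>i j. R i j \<Longrightarrow> R j i" and irrefl: "\<And>i. \<not> R i i"
  shows "(\<Sum>(i,j)\<in>{(i,j). i \<in> U \<and> j \<in> U \<and> R i j}. G i j)
       = (\<Sum>(i,j)\<in>{(i,j). i \<in> U \<and> j \<in> U \<and> R i j \<and> i < j}. G i j + G j i)"
proof -
  define L where "L = {(i,j). i \<in> U \<and> j \<in> U \<and> R i j \<and> i < j}"
  define H where "H = {(i,j). i \<in> U \<and> j \<in> U \<and> R i j \<and> j < i}"
  have fin_L: "finite L" and fin_H: "finite H"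
    unfolding L_def H_def by (auto intro: finite_subset[of _ "U \<times> U"] simp: fin)
  have "{(i,j). i \<in> U \<and> j \<in> U \<and> R i j} = L \<union> H"
    unfolding L_def H_def using irrefl by (auto simp: neq_iff) (metis linorder_neqE)
  moreover have "L \<inter> H = {}" unfolding L_def H_def by auto
  moreover have "H = prod.swap ` L" unfolding L_def H_def using sym by auto
  moreover have "inj_on prod.swap L" by simp
  ultimately show ?thesis
    using fin_L fin_H by (simp add: sum.union_disjoint sum.reindex sum.distrib case_prod_beta L_def)
qed

lemma power2_sum_ordered_pairs:
  fixes f :: "'a::linorder \<Rightarrow> real"
  assumes fin: "finite U"
  shows "(\<Sum>i\<in>U. f i)^2
       = (\<Sum>i\<in>U. (f i)^2) + 2 * (\<Sum>(i,j)\<in>{(i,j). i \<in> U \<and> j \<in> U \<and> i < j}. f i * f j)"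
proof -
  have "Sigma U (\<lambda>i. U - {i}) = {(i,j). i \<in> U \<and> j \<in> U \<and> i \<noteq> j}"
    and "{(i,j). i \<in> U \<and> j \<in> U \<and> i \<noteq> j \<and> i < j} = {(i,j). i \<in> U \<and> j \<in> U \<and> i < j}"
    by auto
  then have "(\<Sum>(i,j)\<in>Sigma U (\<lambda>i. U - {i}). f i * f j)
      = (\<Sum>(i,j)\<in>{(i,j). i \<in> U \<and> j \<in> U \<and> i < j}. 2 * (f i * f j))"
    using sum_symmetric_pairs_ordered[OF fin, of "(\<noteq>)" "\<lambda>i j. f i * f j"]
    by (simp add: mult.commute)
  then show ?thesis
    using power2_sum_eq_offdiag[OF fin, of f] by (simp add: sum_distrib_left case_prod_beta)
qed

lemma power2_sum_minus_sum_squares_ge: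
  fixes r :: "'a \<Rightarrow> real"
  assumes fin: "finite I" and pos: "\<And>i. i \<in> I \<Longrightarrow> r i > 0" and prod_1: "(\<Prod>i\<in>I. r i) = 1"
    and card: "card I \<ge> 2"
  shows "(\<Sum>i\<in>I. r i)^2 - (\<Sum>i\<in>I. (r i)^2) \<ge> real (card I) * (real (card I) - 1)"
proof -
  define Off where "Off = Sigma I (\<lambda>i. I - {i})"
  have fin_Off: "finite Off" using fin by (simp add: Off_def)
  have card_Off: "real (card Off) = real (card I) * (real (card I) - 1)"
    unfolding Off_def using fin card by (simp add: card_Diff_singleton of_nat_diff)
  have "Off \<noteq> {}" using card_Off card by auto
  have prod_fst: "(\<Prod>(i,j)\<in>Off. r i) = 1"
  proof -
    have "(\<Prod>(i,j)\<in>Off. r i) = (\<Prod>i\<in>I. \<Prod>j\<in>I - {i}. r i)"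
      unfolding Off_def using fin by (subst prod.Sigma) auto
    also have "\<dots> = (\<Prod>i\<in>I. r i ^ (card I - 1))"
      using fin by (simp add: card_Diff_singleton)
    finally
    show ?thesis using prod_1 by (simp add: prod_power_distrib[symmetric])
  qed
  have prod_snd: "(\<Prod>(i,j)\<in>Off. r j) = 1"
  proof -
    have "(\<Prod>j\<in>I - {i}. r j) = 1 / r i" if "i \<in> I" for i
      using prod.remove[OF fin that, of r] prod_1 pos[OF that] by (simp add: field_simps)
    moreover have "(\<Prod>(i,j)\<in>Off. r j) = (\<Prod>i\<in>I. \<Prod>j\<in>I - {i}. r j)"
      unfolding Off_def using fin by (subst prod.Sigma) auto
    ultimately have "(\<Prod>(i,j)\<in>Off. r j) = (\<Prod>i\<in>I. 1 / r i)" by simp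
    then show ?thesis using prod_1 by (simp add: prod_dividef)
  qed
  have "(\<Prod>p\<in>Off. case p of (i,j) \<Rightarrow> r i * r j) = 1"
    using prod_fst prod_snd by (simp add: case_prod_beta prod.distrib)
  moreover have "\<And>p. p \<in> Off \<Longrightarrow> (case p of (i,j) \<Rightarrow> r i * r j) \<ge> 0"
    unfolding Off_def using pos by (auto intro!: mult_nonneg_nonneg less_imp_le)
  ultimately have "(\<Sum>p\<in>Off. (case p of (i,j) \<Rightarrow> r i * r j) / card Off) \<ge> 1"
    using arith_geom_mean[OF fin_Off \<open>Off \<noteq> {}\<close>] by (metis powr_one_gt_zero_iff powr_one_eq_one)
  then have "(\<Sum>p\<in>Off. case p of (i,j) \<Rightarrow> r i * r j) \<ge> real (card Off)"
    using \<open>Off \<noteq> {}\<close> fin_Off by (simp add: sum_divide_distrib[symmetric] field_simps card_gt_0_iff)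
  then show ?thesis
    using power2_sum_eq_offdiag[OF fin, of r] card_Off unfolding Off_def by simp
qed

lemma sum_inverse_shifted_squares_le_1:
  fixes r :: "'a \<Rightarrow> real"
  assumes fin: "finite I" and pos: "\<And>i. i \<in> I \<Longrightarrow> r i > 0" and prod_1: "(\<Prod>i\<in>I. r i) = 1"
    and card: "card I \<ge> 2"
  shows "(\<Sum>i\<in>I. 1 / (real (card I) - 1 + (r i)^2)) \<le> 1"
proof -
  define m where "m = real (card I)"
  have "m \<ge> 2" using card by (simp add: m_def)
  define D where "D i = m - 1 + (r i)^2" for i
  have D_pos: "D i > 0" for i using \<open>m \<ge> 2\<close> by (simp add: D_def add_pos_nonneg)
  then have D_nonzero: "D i \<noteq> 0" for i by (metis less_irrefl)
  have "(\<Sum>i\<in>I. r i)^2 = (\<Sum>i\<in>I. (r i / sqrt (D i)) * sqrt (D i))^2"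
    using D_pos by (simp add: less_imp_le D_nonzero)
  also have "\<dots> \<le> (\<Sum>i\<in>I. (r i / sqrt (D i))^2) * (\<Sum>i\<in>I. (sqrt (D i))^2)"
    by (rule Cauchy_Schwarz_ineq_sum)
  also have "\<dots> = (\<Sum>i\<in>I. (r i)^2 / D i) * (\<Sum>i\<in>I. D i)"
    using D_pos by (simp add: power_divide less_imp_le)
  finally have "(\<Sum>i\<in>I. r i)^2 \<le> (\<Sum>i\<in>I. (r i)^2 / D i) * (\<Sum>i\<in>I. D i)" .
  moreover have "(\<Sum>i\<in>I. D i) = m * (m - 1) + (\<Sum>i\<in>I. (r i)^2)"
    by (simp add: D_def sum.distrib m_def)
  moreover have "(\<Sum>i\<in>I. r i)^2 - (\<Sum>i\<in>I. (r i)^2) \<ge> m * (m - 1)"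
    using power2_sum_minus_sum_squares_ge[OF fin pos prod_1 card] by (simp add: m_def)
  ultimately have "(\<Sum>i\<in>I. D i) \<le> (\<Sum>i\<in>I. (r i)^2 / D i) * (\<Sum>i\<in>I. D i)"
    by linarith
  moreover have "(\<Sum>i\<in>I. D i) > 0" using fin card D_pos by (intro sum_pos) auto
  ultimately have "(\<Sum>i\<in>I. (r i)^2 / D i) \<ge> 1" by simp
  have "1 / D i = (1 - (r i)^2 / D i) / (m - 1)" for i
  proof -
    have "1 - (r i)^2 / D i = (m - 1) / D i"
      using D_nonzero[of i] by (simp add: field_simps D_def)
    then show ?thesis using \<open>m \<ge> 2\<close> by simp
  qed
  then have "(\<Sum>i\<in>I. 1 / D i) = (m - (\<Sum>i\<in>I. (r i)^2 / D i)) / (m - 1)"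
    by (simp add: sum_divide_distrib[symmetric] sum_subtractf m_def)
  also have "\<dots> \<le> 1" using \<open>(\<Sum>i\<in>I. (r i)^2 / D i) \<ge> 1\<close> \<open>m \<ge> 2\<close> by (simp add: field_simps)
  finally show ?thesis by (simp add: D_def m_def)
qed

lemma power2_sum_le_permuted_form_of_nonzero:
  fixes x y :: "'a \<Rightarrow> real"
  assumes fin: "finite I" and card: "card I \<ge> 2" and perm: "bij_betw s I I"
    and nonzero: "\<And>i. i \<in> I \<Longrightarrow> y i \<noteq> 0"
  shows "(\<Sum>i\<in>I. x i * y i)^2
       \<le> (real (card I) - 1) * (\<Sum>i\<in>I. (x i)^2 * (y i)^2) + (\<Sum>i\<in>I. (x (s i))^2 * (y i)^2)"
proof -
  define m where "m = real (card I)"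
  have "m \<ge> 2" using card by (simp add: m_def)
  define t where "t = the_inv_into I s"
  have t_in: "j \<in> I \<Longrightarrow> t j \<in> I" for j
    unfolding t_def using perm by (metis bij_betw_def the_inv_into_into order_refl)
  have t_s: "i \<in> I \<Longrightarrow> t (s i) = i" for i
    unfolding t_def using perm by (simp add: bij_betw_def the_inv_into_f_f)
  have perm_t: "bij_betw t I I" unfolding t_def using perm by (rule bij_betw_the_inv_into)
  \<comment> \<open>The right-hand side is \<open>\<Sum>j. x j\<^sup>2 * W j\<close>; Cauchy--Schwarz with these weights leaves
    \<open>\<Sum>j. y j\<^sup>2 / W j \<le> 1\<close>, an inequality between the ratios \<open>\<bar>y (t j)\<bar> / \<bar>y j\<bar>\<close>, whose product is 1.\<close>
  define W where "W j = (m - 1) * (y j)^2 + (y (t j))^2" for j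
  have W_pos: "j \<in> I \<Longrightarrow> W j > 0" for j
    using nonzero \<open>m \<ge> 2\<close> unfolding W_def by (intro add_pos_nonneg mult_pos_pos) auto
  then have W_nonzero: "j \<in> I \<Longrightarrow> W j \<noteq> 0" for j by (metis less_irrefl)
  have "(\<Sum>i\<in>I. (x (s i))^2 * (y i)^2) = (\<Sum>i\<in>I. (x (s i))^2 * (y (t (s i)))^2)"
    using t_s by simp
  also have "\<dots> = (\<Sum>j\<in>I. (x j)^2 * (y (t j))^2)"
    using sum.reindex_bij_betw[OF perm, of "\<lambda>j. (x j)^2 * (y (t j))^2"] by simp
  finally have rhs: "(m - 1) * (\<Sum>i\<in>I. (x i)^2 * (y i)^2) + (\<Sum>i\<in>I. (x (s i))^2 * (y i)^2)
      = (\<Sum>j\<in>I. (x j)^2 * W j)"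
    unfolding W_def by (simp add: sum_distrib_left sum.distrib[symmetric] algebra_simps)
  define r where "r j = \<bar>y (t j)\<bar> / \<bar>y j\<bar>" for j
  have r_pos: "j \<in> I \<Longrightarrow> r j > 0" for j unfolding r_def using nonzero t_in by auto
  have "(\<Prod>j\<in>I. \<bar>y (t j)\<bar>) = (\<Prod>j\<in>I. \<bar>y j\<bar>)"
    using prod.reindex_bij_betw[OF perm_t, of "\<lambda>j. \<bar>y j\<bar>"] by simp
  moreover have "(\<Prod>j\<in>I. \<bar>y j\<bar>) \<noteq> 0" using nonzero fin by simp
  ultimately have r_prod: "(\<Prod>j\<in>I. r j) = 1" unfolding r_def by (simp add: prod_dividef)
  have "j \<in> I \<Longrightarrow> (y j)^2 / W j = 1 / (m - 1 + (r j)^2)" for j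
    using nonzero unfolding W_def r_def by (simp add: field_simps power_divide)
  then have weights_le_1: "(\<Sum>j\<in>I. (y j)^2 / W j) \<le> 1"
    using sum_inverse_shifted_squares_le_1[OF fin r_pos r_prod card] by (simp add: m_def)
  have "(\<Sum>i\<in>I. x i * y i)^2 = (\<Sum>i\<in>I. (x i * sqrt (W i)) * (y i / sqrt (W i)))^2"
    using W_pos W_nonzero by (intro arg_cong[where f="\<lambda>z. z^2"] sum.cong) (simp_all add: less_imp_le)
  also have "\<dots> \<le> (\<Sum>i\<in>I. (x i * sqrt (W i))^2) * (\<Sum>i\<in>I. (y i / sqrt (W i))^2)"
    by (rule Cauchy_Schwarz_ineq_sum)
  also have "\<dots> = (\<Sum>i\<in>I. (x i)^2 * W i) * (\<Sum>i\<in>I. (y i)^2 / W i)"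
    using W_pos by (simp add: power_divide power_mult_distrib less_imp_le)
  also have "\<dots> \<le> (\<Sum>i\<in>I. (x i)^2 * W i)"
    using weights_le_1 W_pos by (intro mult_left_le sum_nonneg) (simp_all add: less_imp_le)
  finally show ?thesis using rhs by (simp add: m_def)
qed

lemma power2_sum_le_permuted_form:
  fixes x y :: "'a \<Rightarrow> real"
  assumes fin: "finite I" and card: "card I \<ge> 2" and perm: "bij_betw s I I"
  shows "(\<Sum>i\<in>I. x i * y i)^2
       \<le> (real (card I) - 1) * (\<Sum>i\<in>I. (x i)^2 * (y i)^2) + (\<Sum>i\<in>I. (x (s i))^2 * (y i)^2)"
proof -
  define y' where "y' e i = (if y i = 0 then e else y i)" for e :: real and i
  have y'_tendsto: "((\<lambda>e. y' e i) \<longlongrightarrow> y i) (at 0)" for i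
    by (cases "y i = 0") (simp_all add: y'_def tendsto_ident_at)
  have "\<forall>\<^sub>F e in at 0. (\<Sum>i\<in>I. x i * y' e i)^2
      \<le> (real (card I) - 1) * (\<Sum>i\<in>I. (x i)^2 * (y' e i)^2) + (\<Sum>i\<in>I. (x (s i))^2 * (y' e i)^2)"
    unfolding eventually_at_filter
    by (intro always_eventually allI impI power2_sum_le_permuted_form_of_nonzero[OF fin card perm])
      (simp add: y'_def)
  then show ?thesis
    by (rule tendsto_le[rotated 3]) (auto intro!: tendsto_intros y'_tendsto)
qed

lemma biquad_expand:
  "biquad n k x y = (real n - 1) * (\<Sum>i\<in>{1..n}. (x i)^2 * (y i)^2)
     + (\<Sum>i\<in>{1..n}. (x (sigma n k i))^2 * (y i)^2) - (\<Sum>i\<in>{1..n}. x i * y i)^2"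
proof -
  have row: "(\<Sum>j\<in>{1..n}. y i * qi_hou n k (\<lambda>a b. x a * x b) i j * y j)
      = (real n - 1) * (x i)^2 * (y i)^2 + (x (sigma n k i))^2 * (y i)^2
        - x i * y i * (\<Sum>j\<in>{1..n}. x j * y j)"
    if "i \<in> {1..n}" for i
  proof -
    have "(\<Sum>j\<in>{1..n}. y i * qi_hou n k (\<lambda>a b. x a * x b) i j * y j)
       = (\<Sum>j\<in>{1..n}. (if i = j then y i * ((real n - 1) * (x i * x i)
            + x (sigma n k i) * x (sigma n k i)) * y i else 0) - x i * y i * (x j * y j))"
      unfolding qi_hou_def by (intro sum.cong refl) (auto simp: algebra_simps)
    also have "\<dots> = y i * ((real n - 1) * (x i * x i) + x (sigma n k i) * x (sigma n k i)) * y i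
        - x i * y i * (\<Sum>j\<in>{1..n}. x j * y j)"
      using that by (simp add: sum_subtractf sum_distrib_left)
    finally show ?thesis by (simp add: power2_eq_square algebra_simps)
  qed
  have "(\<Sum>i\<in>{1..n}. x i * y i)^2 = (\<Sum>i\<in>{1..n}. x i * y i * (\<Sum>j\<in>{1..n}. x j * y j))"
    by (simp add: power2_eq_square sum_distrib_right)
  then show ?thesis
    unfolding biquad_def using row by (simp add: sum_subtractf sum.distrib sum_distrib_left mult.assoc)
qed

lemma bij_betw_sigma_1:
  assumes "m \<ge> 1" shows "bij_betw (sigma m 1) {1..m} {1..m}"
proof (rule bij_betwI[where g = "\<lambda>j. if j = 1 then m else j - 1"])
  show "sigma m 1 \<in> {1..m} \<rightarrow> {1..m}"
    using assms by (auto simp: sigma_def Suc_leI)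
qed (use assms in \<open>auto simp: sigma_def mod_if\<close>)

lemma biquad_1_nonneg:
  assumes "m \<ge> 2" shows "biquad m 1 x y \<ge> 0"
  using power2_sum_le_permuted_form[of "{1..m}" "sigma m 1" x y] assms bij_betw_sigma_1[of m]
  by (simp add: biquad_expand)

lemma bij_betw_mod_atLeastAtMost:
  fixes k :: nat
  assumes "k \<ge> 1" shows "bij_betw (\<lambda>d. d mod k) {1..k} {..<k}"
  by (rule bij_betwI[where g = "\<lambda>r. if r = 0 then k else r"]) (use assms in \<open>auto simp: le_less\<close>)

lemma sum_residue_classes:
  fixes c :: "'a \<Rightarrow> nat"
  assumes "k \<ge> 1" and "finite S" and "\<And>p. p \<in> S \<Longrightarrow> c p < k"
  shows "(\<Sum>d=1..k. \<Sum>p\<in>{p\<in>S. c p = d mod k}. g p) = (\<Sum>p\<in>S. g p)"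
proof -
  have "(\<Sum>d=1..k. \<Sum>p\<in>{p\<in>S. c p = d mod k}. g p) = (\<Sum>r<k. \<Sum>p\<in>{p\<in>S. c p = r}. g p)"
    using sum.reindex_bij_betw[OF bij_betw_mod_atLeastAtMost[OF assms(1)],
        of "\<lambda>r. \<Sum>p\<in>{p\<in>S. c p = r}. g p"] by simp
  also have "\<dots> = (\<Sum>p\<in>S. g p)"
    using sum.group[of S "{..<k}" c g] assms by auto
  finally show ?thesis .
qed

lemma bij_betw_residue_class:
  fixes k m n d :: nat
  assumes k: "k \<ge> 1" and n: "n = m * k" and d: "d \<in> {1..k}"
  shows "bij_betw (\<lambda>t. d + (t - 1) * k) {1..m} {i. 1 \<le> i \<and> i \<le> n \<and> i mod k = d mod k}"
proof (rule bij_betwI')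
  fix s t :: nat
  show "(d + (s - 1) * k = d + (t - 1) * k) = (s = t)" if "s \<in> {1..m}" "t \<in> {1..m}"
    using that k by auto
next
  fix t assume t: "t \<in> {1..m}"
  then have "d + (t - 1) * k \<le> k + (m - 1) * k"
    using d by (intro add_mono mult_right_mono) auto
  also have "\<dots> = n" using n t by (cases m) auto
  finally show "d + (t - 1) * k \<in> {i. 1 \<le> i \<and> i \<le> n \<and> i mod k = d mod k}"
    using d by auto
next
  fix i assume "i \<in> {i. 1 \<le> i \<and> i \<le> n \<and> i mod k = d mod k}"
  then have i: "1 \<le> i" "i \<le> n" "i mod k = d mod k" by auto
  have "d \<le> i"
    using i d mod_less_eq_dividend[of i k] by (cases "d = k") (auto dest: dvd_imp_le)
  then obtain q where q: "i = d + q * k"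
    using i(3) by (metis mod_eq_nat2E mult.commute)
  have "1 \<le> d" using d by simp
  with q i(2) n have "q * k < m * k" by linarith
  then have "q + 1 \<in> {1..m}" by simp
  then show "\<exists>t\<in>{1..m}. i = d + (t - 1) * k" using q by force
qed

lemma card_residue_class_complement:
  fixes k m n i :: nat
  assumes k: "k \<ge> 1" and n: "n = m * k"
  shows "card {j\<in>{1..n}. j mod k \<noteq> i mod k} = n - m"
proof -
  have "i mod k \<in> (\<lambda>d. d mod k) ` {1..k}"
    using bij_betw_imp_surj_on[OF bij_betw_mod_atLeastAtMost[OF k]] k by simp
  then obtain d where d: "d \<in> {1..k}" "d mod k = i mod k" by force
  define C where "C = {j. 1 \<le> j \<and> j \<le> n \<and> j mod k = d mod k}"
  have "card C = m"
    using bij_betw_same_card[OF bij_betw_residue_class[OF k n d(1)]] by (simp add: C_def)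
  moreover have "{j\<in>{1..n}. j mod k \<noteq> i mod k} = {1..n} - C" "C \<subseteq> {1..n}"
    using d by (auto simp: C_def)
  ultimately show ?thesis by (simp add: card_Diff_subset finite_subset)
qed

lemma sum_squares_mixed_residue_pairs:
  fixes k n m :: nat and a :: "nat \<Rightarrow> real"
  assumes k: "k \<ge> 1" and n: "n = m * k"
  defines "Diff \<equiv> {(i,j). 1 \<le> i \<and> i < j \<and> j \<le> n \<and> i mod k \<noteq> j mod k}"
  shows "(\<Sum>(i,j)\<in>Diff. (a i - a j)^2)
       = (real n - real m) * (\<Sum>i\<in>{1..n}. (a i)^2) - 2 * (\<Sum>(i,j)\<in>Diff. a i * a j)"
proof -
  have "(\<Sum>(i,j)\<in>Diff. (a i)^2 + (a j)^2)
      = (\<Sum>(i,j)\<in>{(i,j). i \<in> {1..n} \<and> j \<in> {1..n} \<and> i mod k \<noteq> j mod k}. (a i)^2)"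
    unfolding Diff_def by (subst sum_symmetric_pairs_ordered) (auto intro!: sum.cong)
  also have "\<dots> = (\<Sum>i\<in>{1..n}. \<Sum>j\<in>{j\<in>{1..n}. j mod k \<noteq> i mod k}. (a i)^2)"
    by (subst sum.Sigma) (auto intro!: sum.cong)
  also have "\<dots> = (real n - real m) * (\<Sum>i\<in>{1..n}. (a i)^2)"
    using card_residue_class_complement[OF k n] n k by (simp add: sum_distrib_left of_nat_diff)
  finally show ?thesis
    unfolding power2_diff by (simp add: sum_subtractf sum.distrib sum_distrib_left case_prod_beta algebra_simps)
qed

lemma sigma_residue_class:
  fixes k m n d t :: nat
  assumes k: "k \<ge> 1" and n: "n = m * k" and d: "d \<in> {1..k}" and t: "t \<in> {1..m}"
  shows "sigma n k (d + (t - 1) * k) = d + (sigma m 1 t - 1) * k"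
proof (cases "t = m")
  case True
  then have "d + (t - 1) * k + k - 1 = (d - 1) + n" using n d t by (cases m) (auto simp: algebra_simps)
  moreover have "d - 1 < n" using n d t by (cases m) auto
  ultimately have "(d + (t - 1) * k + k - 1) mod n = d - 1" by (simp only: mod_add_self2 mod_less)
  then show ?thesis using True d t by (simp add: sigma_def)
next
  case False
  then have "t < m" using t by auto
  then have "t * k \<le> (m - 1) * k" by (intro mult_right_mono) auto
  moreover have "k + (m - 1) * k = n" using n \<open>t < m\<close> by (cases m) auto
  moreover have "1 \<le> d" "d \<le> k" using d by auto
  ultimately have "d - 1 + t * k < n" by linarith
  moreover have "d + (t - 1) * k + k - 1 = d - 1 + t * k" using t d by (cases t) (auto simp: algebra_simps)
  ultimately show ?thesis using d \<open>t < m\<close> by (simp add: sigma_def)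
qed

lemma Fform_eq_biquad_restriction:
  fixes k n m d :: nat
  assumes k: "k \<ge> 1" and n: "n = m * k" and d: "d \<in> {1..k}"
  shows "Fform n k d x y = biquad m 1 (\<lambda>t. x (d + (t - 1) * k)) (\<lambda>t. y (d + (t - 1) * k))"
proof -
  define C where "C = {i. 1 \<le> i \<and> i \<le> n \<and> i mod k = d mod k}"
  define h where "h t = d + (t - 1) * k" for t
  have reindex: "(\<Sum>i\<in>C. f i) = (\<Sum>t\<in>{1..m}. f (h t))" for f :: "nat \<Rightarrow> real"
    using sum.reindex_bij_betw[OF bij_betw_residue_class[OF k n d], of f] by (simp add: C_def h_def)
  have "finite C" unfolding C_def by (rule finite_subset[of _ "{1..n}"]) auto
  have pairs: "{(i,j). 1 \<le> i \<and> i < j \<and> j \<le> n \<and> i mod k = d mod k \<and> j mod k = d mod k}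
      = {(i,j). i \<in> C \<and> j \<in> C \<and> i < j}"
    unfolding C_def by auto
  have "n div k = m" using n k by simp
  then have "Fform n k d x y = (real m - 2) * (\<Sum>i\<in>C. (x i)^2 * (y i)^2)
        - 2 * (\<Sum>(i,j)\<in>{(i,j). i \<in> C \<and> j \<in> C \<and> i < j}. x i * y i * (x j * y j))
        + (\<Sum>i\<in>C. (x (sigma n k i))^2 * (y i)^2)"
    unfolding Fform_def pairs C_def[symmetric] by (simp add: mult.assoc)
  moreover have "biquad m 1 (\<lambda>t. x (h t)) (\<lambda>t. y (h t)) = (real m - 1) * (\<Sum>i\<in>C. (x i)^2 * (y i)^2)
        + (\<Sum>i\<in>C. (x (sigma n k i))^2 * (y i)^2) - (\<Sum>i\<in>C. x i * y i)^2"
  proof -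
    have "(\<Sum>t\<in>{1..m}. (x (h (sigma m 1 t)))^2 * (y (h t))^2)
        = (\<Sum>t\<in>{1..m}. (x (sigma n k (h t)))^2 * (y (h t))^2)"
      unfolding h_def using sigma_residue_class[OF k n d] by simp
    then show ?thesis unfolding biquad_expand reindex by simp
  qed
  ultimately show ?thesis
    unfolding h_def[symmetric] power2_sum_ordered_pairs[OF \<open>finite C\<close>]
    by (simp add: power_mult_distrib algebra_simps)
qed

lemma biquad_eq_sum_Fform_plus_squares:
  fixes k n m :: nat
  assumes k: "k \<ge> 1" and n: "n = m * k"
  shows "biquad n k x y = (\<Sum>d=1..k. Fform n k d x y)
            + (\<Sum>(i,j)\<in>{(i,j). 1 \<le> i \<and> i < j \<and> j \<le> n \<and> i mod k \<noteq> j mod k}.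
                 (x i * y i - x j * y j)^2)"
proof -
  define A where "A = (\<Sum>i\<in>{1..n}. (x i)^2 * (y i)^2)"
  define T where "T = (\<Sum>i\<in>{1..n}. (x (sigma n k i))^2 * (y i)^2)"
  define Same where "Same = {(i,j). 1 \<le> i \<and> i < j \<and> j \<le> n \<and> i mod k = j mod k}"
  define Diff where "Diff = {(i,j). 1 \<le> i \<and> i < j \<and> j \<le> n \<and> i mod k \<noteq> j mod k}"
  define P where "P S = (\<Sum>(i,j)\<in>S. x i * y i * x j * y j)" for S
  have fin_Same: "finite Same" and fin_Diff: "finite Diff"
    unfolding Same_def Diff_def by (auto intro: finite_subset[of _ "{1..n} \<times> {1..n}"])
  have classes: "(\<Sum>d=1..k. \<Sum>i\<in>{i. 1 \<le> i \<and> i \<le> n \<and> i mod k = d mod k}. f i) = (\<Sum>i\<in>{1..n}. f i)"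
    for f :: "nat \<Rightarrow> real"
    using sum_residue_classes[OF k, of "{1..n}" "\<lambda>i. i mod k" f] k by simp
  have "{(i,j). 1 \<le> i \<and> i < j \<and> j \<le> n \<and> i mod k = d mod k \<and> j mod k = d mod k}
      = {p\<in>Same. fst p mod k = d mod k}" for d
    unfolding Same_def by auto
  then have class_pairs: "(\<Sum>d=1..k. P {(i,j). 1 \<le> i \<and> i < j \<and> j \<le> n \<and> i mod k = d mod k \<and> j mod k = d mod k})
      = P Same"
    unfolding P_def using sum_residue_classes[OF k fin_Same, of "\<lambda>p. fst p mod k"] k by simp
  have "n div k = m" using n k by simp
  then have sum_Fform: "(\<Sum>d=1..k. Fform n k d x y) = (real m - 2) * A - 2 * P Same + T"
    unfolding Fform_def A_def T_def P_def[symmetric]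
    by (simp only: sum.distrib sum_subtractf sum_distrib_left[symmetric] classes class_pairs)
  have "{(i,j). i \<in> {1..n} \<and> j \<in> {1..n} \<and> i < j} = Same \<union> Diff" "Same \<inter> Diff = {}"
    unfolding Same_def Diff_def by auto
  then have "(\<Sum>i\<in>{1..n}. x i * y i)^2 = A + 2 * (\<Sum>(i,j)\<in>Same \<union> Diff. x i * y i * (x j * y j))"
    using power2_sum_ordered_pairs[of "{1..n}" "\<lambda>i. x i * y i"] by (simp add: A_def power_mult_distrib)
  then have square: "(\<Sum>i\<in>{1..n}. x i * y i)^2 = A + 2 * (P Same + P Diff)"
    using \<open>Same \<inter> Diff = {}\<close> by (simp add: sum.union_disjoint[OF fin_Same fin_Diff] P_def mult.assoc)
  have "(\<Sum>(i,j)\<in>Diff. (x i * y i - x j * y j)^2) = (real n - real m) * A - 2 * P Diff"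
    using sum_squares_mixed_residue_pairs[OF k n, of "\<lambda>i. x i * y i"]
    by (simp add: Diff_def A_def P_def power_mult_distrib mult.assoc)
  then show ?thesis
    unfolding Diff_def[symmetric] biquad_expand A_def[symmetric] T_def[symmetric] sum_Fform square
    by (simp add: algebra_simps)
qed

theorem proposition3:
  fixes n k :: nat
  assumes "n \<ge> 3" and "1 \<le> k" and "k \<le> n - 1"
    and "k dvd n" and "n div k > 1"
  shows "(\<forall>x y. biquad n k x y =
            (\<Sum>d=1..k. Fform n k d x y)
            + (\<Sum>(i,j)\<in>{(i,j). 1 \<le> i \<and> i < j \<and> j \<le> n \<and> i mod k \<noteq> j mod k}.
                 (x i * y i - x j * y j)^2))
       \<and> (\<forall>d\<in>{1..k}. \<forall>x y. Fform n k d x y \<ge> 0)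
       \<and> (\<forall>d\<in>{1..k}. \<forall>x y. Fform n k d x y =
              biquad (n div k) 1 (\<lambda>m. x (d + (m - 1) * k)) (\<lambda>m. y (d + (m - 1) * k)))"
proof -
  have n: "n = n div k * k" using \<open>k dvd n\<close> by simp
  have restriction: "\<forall>d\<in>{1..k}. \<forall>x y. Fform n k d x y =
      biquad (n div k) 1 (\<lambda>m. x (d + (m - 1) * k)) (\<lambda>m. y (d + (m - 1) * k))"
    using Fform_eq_biquad_restriction[OF \<open>1 \<le> k\<close> n] by blast
  moreover have "\<forall>d\<in>{1..k}. \<forall>x y. Fform n k d x y \<ge> 0"
    using restriction biquad_1_nonneg \<open>n div k > 1\<close> by simp
  ultimately show ?thesis
    using biquad_eq_sum_Fform_plus_squares[OF \<open>1 \<le> k\<close> n] by blast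
qed

end
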